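(* Let $q\ge2$, $n\ge 1$, and ${\boldsymbol y}\in\Sigma_q^{n-1}$ with run length profile $(r_1,\dots,r_{\rho({\boldsymbol y})})$. Then $\mathsf{H}^{\mathsf{In}}_{1\text{-}\mathsf{Del}}({\boldsymbol y})$ is invariant to permutations of the run length profile of ${\boldsymbol y}$ and $$\mathsf{H}^{\mathsf{In}}_{1\text{-}\mathsf{Del}}({\boldsymbol y})=\log_2(nq)-\frac{1}{nq}\sum_{i=1}^{\rho({\boldsymbol y})}(r_i+1)\log_2(r_i+1).$$
   Context: $\Sigma_q=\{0,1,\dots,q-1\}$. For sequences ${\boldsymbol x}$ of length $N$ and ${\boldsymbol y}$ of length $\ell\le N$, $\omega_{{\boldsymbol y}}({\boldsymbol x})$ is the number of index tuples $1\le i_1<\dots<i_\ell\le N$ with $x_{i_j}=y_j$. The $k$-deletion channel with input length $n$ maps ${\boldsymbol x}\in\Sigma_q^n$ to ${\boldsymbol y}\in\Sigma_q^{n-k}$ with probability $\omega_{{\boldsymbol y}}({\boldsymbol x})/\binom nk$. Under uniform transmission $X$ is uniform on $\Sigma_q^n$ and $\mathsf{H}^{\mathsf{In}}_{k\text{-}\mathsf{Del}}({\boldsymbol y})=H(X\mid Y={\boldsymbol y})$ (base-2 logarithms), the posterior being $P({\boldsymbol x}\mid {\boldsymbol y})=\Pr\{{\boldsymbol y}\mid{\boldsymbol x}\}/\sum_{{\boldsymbol x}'}\Pr\{{\boldsymbol y}\mid{\boldsymbol x}'\}$. A run is a maximal block of identical consecutive symbols; $\rho({\boldsymbol y})$ is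 the number of runs and the run length profile is the vector $(r_1,\dots,r_{\rho({\boldsymbol y})})$ of run lengths in order from left to right. *)

theory Defs
  imports Complex_Main "HOL-Library.Multiset"
begin

definition seqs :: "nat \<Rightarrow> nat \<Rightarrow> nat list set" where
  "seqs q n = {x. length x = n \<and> set x \<subseteq> {0..<q}}"

text \<open>omega_y(x): number of increasing index tuples (= index subsets of size |y|)
  at which x reads y.\<close>
definition omega :: "nat list \<Rightarrow> nat list \<Rightarrow> nat" where
  "omega y x = card {I. I \<subseteq> {0..<length x} \<and> card I = length y \<and> nths x I = y}"

definition del_prob :: "nat \<Rightarrow> nat \<Rightarrow> nat list \<Rightarrow> nat list \<Rightarrow> real" where
  "del_prob n k x y = real (omega y x) / real (n choose k)"

text \<open>Posterior P(x | y) under uniform input on Sigma_q^n.\<close>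
definition posterior :: "nat \<Rightarrow> nat \<Rightarrow> nat \<Rightarrow> nat list \<Rightarrow> nat list \<Rightarrow> real" where
  "posterior q n k y x = del_prob n k x y / (\<Sum>x'\<in>seqs q n. del_prob n k x' y)"

definition H_in_del :: "nat \<Rightarrow> nat \<Rightarrow> nat \<Rightarrow> nat list \<Rightarrow> real" where
  "H_in_del q n k y = - (\<Sum>x\<in>seqs q n. let p = posterior q n k y x in
                          if p = 0 then 0 else p * log 2 p)"

function rlp :: "'a list \<Rightarrow> nat list" where
  "rlp [] = []"
| "rlp (a # xs) = Suc (length (takeWhile (\<lambda>z. z = a) xs)) # rlp (dropWhile (\<lambda>z. z = a) xs)"
  by pat_completeness auto
termination
  by (relation "measure length") (auto simp: le_imp_less_Suc length_dropWhile_le)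

definition num_runs :: "'a list \<Rightarrow> nat" where
  "num_runs y = length (rlp y)"

end

theory Submission
  imports Defs
begin

text \<open>Let \<open>c(x)\<close> be the number of positions of \<open>x \<in> \<Sigma>\<^sub>q\<^sup>n\<close> whose deletion leaves \<open>y\<close>; this is
  \<open>\<omega>\<^sub>y(x)\<close>, so the posterior is \<open>c(x) / \<Sum>\<^sub>x c(x)\<close>.  Removing the first symbol \<open>a\<close> of \<open>y\<close> gives
  a recursion for \<open>c\<close>, from which one obtains, by induction on \<open>y\<close>, for every \<open>g\<close> with \<open>g 0 = 0\<close>,
  \<open>\<Sum>\<^sub>x g(c(x)) = \<Sum>\<^sub>i (g(r\<^sub>i+1) - (r\<^sub>i+1) g(1)) + nq g(1)\<close>:
  inserting a symbol into (or next to) the \<open>i\<close>-th run of the same symbol produces one \<open>x\<close> with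
  \<open>c(x) = r\<^sub>i + 1\<close>, and every other \<open>x\<close> has \<open>c(x) \<le> 1\<close>.  With \<open>g(k) = k\<close> this gives
  \<open>\<Sum>\<^sub>x c(x) = nq\<close>, and with \<open>g(k) = k log k\<close> (where \<open>g(1) = 0\<close>) the entropy of the
  distribution \<open>c/(nq)\<close> becomes \<open>log(nq) - (1/nq) \<Sum>\<^sub>i (r\<^sub>i+1) log(r\<^sub>i+1)\<close>,
  which only depends on the multiset of run lengths.\<close>

definition del_at :: "nat \<Rightarrow> 'a list \<Rightarrow> 'a list" where
  "del_at i x = take i x @ drop (Suc i) x"

definition deletion_count :: "'a list \<Rightarrow> 'a list \<Rightarrow> nat" where
  "deletion_count y x = card {i. i < length x \<and> del_at i x = y}"

lemma del_at_0 [simp]: "del_at 0 (b # x) = x"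
  by (simp add: del_at_def)

lemma del_at_Suc_Cons [simp]: "del_at (Suc i) (b # x) = b # del_at i x"
  by (simp add: del_at_def)

lemma nths_minus_singleton:
  assumes "i < length x"
  shows "nths x ({0..<length x} - {i}) = del_at i x"
proof -
  have x: "x = take i x @ (x ! i # drop (Suc i) x)"
    using assms by (simp add: id_take_nth_drop)
  have "nths x ({0..<length x} - {i}) = nths (take i x) ({0..<length x} - {i}) @
     nths (x ! i # drop (Suc i) x) {j. j + length (take i x) \<in> {0..<length x} - {i}}"
    by (subst x, subst nths_append) simp
  also have "nths (take i x) ({0..<length x} - {i}) = take i x"
    using assms by (intro nths_all) auto
  also have "nths (x ! i # drop (Suc i) x) {j. j + length (take i x) \<in> {0..<length x} - {i}}
      = drop (Suc i) x"
    using assms by (simp add: nths_Cons, intro nths_all) auto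
  finally show ?thesis
    by (simp add: del_at_def)
qed

lemma omega_eq_deletion_count:
  assumes len: "length x = Suc (length y)"
  shows "omega y x = deletion_count y x"
proof -
  let ?N = "length x"
  let ?D = "{i. i < ?N \<and> del_at i x = y}"
  let ?compl = "\<lambda>i. {0..<?N} - {i}"
  have "{I. I \<subseteq> {0..<?N} \<and> card I = length y \<and> nths x I = y} = ?compl ` ?D"
  proof (intro set_eqI iffI)
    fix I assume "I \<in> {I. I \<subseteq> {0..<?N} \<and> card I = length y \<and> nths x I = y}"
    then have I: "I \<subseteq> {0..<?N}" "card I = length y" "nths x I = y"
      by auto
    have "card ({0..<?N} - I) = 1"
      using I len by (simp add: card_Diff_subset finite_subset)
    then obtain i where i: "{0..<?N} - I = {i}"
      by (auto simp: card_Suc_eq)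
    then have "i < ?N" and I_eq: "I = ?compl i"
      using I(1) by auto
    with I(3) have "i \<in> ?D"
      by (simp add: nths_minus_singleton)
    with I_eq show "I \<in> ?compl ` ?D"
      by blast
  next
    fix I assume "I \<in> ?compl ` ?D"
    then obtain i where i: "i < ?N" "del_at i x = y" and I_eq: "I = ?compl i"
      by auto
    have "nths x I = y"
      using i by (simp only: I_eq nths_minus_singleton)
    moreover have "card I = length y"
      using i len by (simp add: I_eq)
    ultimately show "I \<in> {I. I \<subseteq> {0..<?N} \<and> card I = length y \<and> nths x I = y}"
      using I_eq by auto
  qed
  moreover have "inj_on ?compl ?D"
  proof (rule inj_onI)
    fix i j assume "i \<in> ?D" and "?compl i = ?compl j"
    then have "i < ?N" and "i \<notin> ?compl j"
      by (metis (no_types, lifting) mem_Collect_eq, metis Diff_iff singletonI)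
    then show "i = j"
      by simp
  qed
  ultimately show ?thesis
    unfolding omega_def deletion_count_def by (simp add: card_image)
qed

lemma deletion_count_Nil: "deletion_count [] [b] = 1"
proof -
  have "{i. i < length [b] \<and> del_at i [b] = []} = {0}"
    by auto
  then show ?thesis
    by (simp add: deletion_count_def)
qed

lemma deletion_count_Cons:
  "deletion_count (a # y) (b # w) =
     (if w = a # y then 1 else 0) + (if b = a then deletion_count y w else 0)"
proof -
  let ?D = "\<lambda>y w. {i. i < length w \<and> del_at i w = y}"
  let ?head = "if w = a # y then {0::nat} else {}"
  let ?tail = "if b = a then Suc ` ?D y w else {}"
  have split: "?D (a # y) (b # w) = ?head \<union> ?tail"
  proof (intro set_eqI)
    fix i show "i \<in> ?D (a # y) (b # w) \<longleftrightarrow> i \<in> ?head \<union> ?tail"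
      by (cases i) auto
  qed
  have "card (?head \<union> ?tail) = card ?head + card ?tail"
    by (rule card_Un_disjoint) auto
  moreover have "card ?tail = (if b = a then card (?D y w) else 0)"
    by (simp add: card_image)
  ultimately show ?thesis
    unfolding deletion_count_def split by simp
qed

lemma deletion_count_Cons_self:
  "deletion_count y (a # y) = Suc (length (takeWhile (\<lambda>z. z = a) y))"
  by (induction y arbitrary: a) (simp_all add: deletion_count_Nil deletion_count_Cons)

lemma sum_list_rlp_Cons:
  fixes h :: "nat \<Rightarrow> 'b :: ab_group_add" and a :: 'a and y :: "'a list"
  assumes "h 0 = 0"
  defines "t \<equiv> length (takeWhile (\<lambda>z. z = a) y)"
  shows "(\<Sum>r\<leftarrow>rlp (a # y). h r) = (\<Sum>r\<leftarrow>rlp y. h r) - h t + h (Suc t)"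
proof (cases y)
  case Nil
  then show ?thesis
    using assms by simp
next
  case (Cons b y')
  then show ?thesis
    using assms by (cases "b = a") (simp_all add: algebra_simps)
qed

lemma finite_seqs: "finite (seqs q n)"
  unfolding seqs_def using finite_lists_length_eq[of "{0..<q}" n] by (simp add: conj_commute)

lemma seqs_0: "seqs q 0 = {[]}"
  unfolding seqs_def by auto

lemma sum_seqs_Suc:
  "(\<Sum>x\<in>seqs q (Suc k). f x) = (\<Sum>b<q. \<Sum>w\<in>seqs q k. f (b # w))"
proof -
  have "seqs q (Suc k) = (\<lambda>(b, w). b # w) ` ({..<q} \<times> seqs q k)"
    unfolding seqs_def by (auto simp: length_Suc_conv image_iff)
  then have "(\<Sum>x\<in>seqs q (Suc k). f x) = (\<Sum>(b, w)\<in>{..<q} \<times> seqs q k. f (b # w))"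
    by (simp add: sum.reindex inj_on_def case_prod_beta)
  then show ?thesis
    by (simp add: sum.cartesian_product)
qed

lemma sum_seqs_deletion_count_Cons:
  fixes g :: "nat \<Rightarrow> real"
  assumes ay: "set (a # y) \<subseteq> {0..<q}" and "g 0 = 0"
  defines "c \<equiv> deletion_count y (a # y)"
  shows "(\<Sum>x\<in>seqs q (Suc (Suc (length y))). g (deletion_count (a # y) x)) =
    (\<Sum>w\<in>seqs q (Suc (length y)). g (deletion_count y w)) - g c + g (Suc c) + (real q - 1) * g 1"
proof -
  let ?W = "seqs q (Suc (length y))"
  let ?F = "\<lambda>b. \<Sum>w\<in>?W. g (deletion_count (a # y) (b # w))"
  have ay_W: "a # y \<in> ?W" and a: "a < q"
    using ay by (auto simp: seqs_def)
  have other: "?F b = g 1" if "b \<noteq> a" for b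
  proof -
    have "?F b = (\<Sum>w\<in>?W. if w = a # y then g 1 else 0)"
      using that \<open>g 0 = 0\<close> by (intro sum.cong) (auto simp: deletion_count_Cons)
    then show ?thesis
      using ay_W finite_seqs by simp
  qed
  have "?F a = (\<Sum>w\<in>?W. g (deletion_count y w) +
      (if w = a # y then g (Suc (deletion_count y w)) - g (deletion_count y w) else 0))"
    by (intro sum.cong) (auto simp: deletion_count_Cons)
  also have "\<dots> = (\<Sum>w\<in>?W. g (deletion_count y w)) + (g (Suc c) - g c)"
    using ay_W finite_seqs by (simp add: sum.distrib c_def)
  finally have same: "?F a = (\<Sum>w\<in>?W. g (deletion_count y w)) - g c + g (Suc c)"
    by simp
  have "(\<Sum>x\<in>seqs q (Suc (Suc (length y))). g (deletion_count (a # y) x)) = (\<Sum>b<q. ?F b)"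
    by (simp add: sum_seqs_Suc)
  also have "\<dots> = ?F a + (\<Sum>b\<in>{..<q} - {a}. ?F b)"
    using a by (subst sum.remove[of _ a]) auto
  also have "(\<Sum>b\<in>{..<q} - {a}. ?F b) = (real q - 1) * g 1"
    using a by (simp add: other of_nat_diff)
  finally show ?thesis
    by (simp add: same)
qed

lemma sum_seqs_deletion_count:
  fixes g :: "nat \<Rightarrow> real"
  assumes "set y \<subseteq> {0..<q}" and "g 0 = 0"
  shows "(\<Sum>x\<in>seqs q (Suc (length y)). g (deletion_count y x)) =
    (\<Sum>r\<leftarrow>rlp y. g (Suc r) - real (Suc r) * g 1) + real (Suc (length y)) * real q * g 1"
  using assms(1)
proof (induction y)
  case Nil
  then show ?case
    by (simp add: sum_seqs_Suc seqs_0 deletion_count_Nil)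
next
  case (Cons a y)
  define t where "t = length (takeWhile (\<lambda>z. z = a) y)"
  have "(\<Sum>r\<leftarrow>rlp (a # y). g (Suc r) - real (Suc r) * g 1) =
      (\<Sum>r\<leftarrow>rlp y. g (Suc r) - real (Suc r) * g 1)
        - (g (Suc t) - real (Suc t) * g 1) + (g (Suc (Suc t)) - real (Suc (Suc t)) * g 1)"
    unfolding t_def by (rule sum_list_rlp_Cons) simp
  with Cons sum_seqs_deletion_count_Cons[of a y q g] \<open>g 0 = 0\<close> show ?case
    by (simp add: deletion_count_Cons_self t_def algebra_simps del: rlp.simps)
qed

lemma entropy_of_counts:
  fixes c :: "'a \<Rightarrow> real"
  assumes total: "(\<Sum>x\<in>A. c x) = N" and "N > 0"
  shows "- (\<Sum>x\<in>A. let p = c x / N in if p = 0 then 0 else p * log b p)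
    = log b N - (\<Sum>x\<in>A. c x * log b (c x)) / N"
proof -
  have summand: "(let p = c x / N in if p = 0 then 0 else p * log b p)
      = c x * log b (c x) / N - c x / N * log b N" for x
    using \<open>N > 0\<close> by (cases "c x = 0") (simp_all add: log_divide algebra_simps)
  have "(\<Sum>x\<in>A. c x / N * log b N) = log b N"
    using \<open>N > 0\<close> by (simp add: sum_distrib_right[symmetric] sum_divide_distrib[symmetric] total)
  then show ?thesis
    by (simp add: summand sum_subtractf sum_divide_distrib[symmetric])
qed

lemma H_in_del_1:
  assumes "q \<ge> 1" and y: "y \<in> seqs q m"
  shows "H_in_del q (Suc m) 1 y = log 2 (real (Suc m) * real q)
     - (\<Sum>r\<leftarrow>rlp y. (real r + 1) * log 2 (real r + 1)) / (real (Suc m) * real q)"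
proof -
  define N where "N = real (Suc m) * real q"
  define c where "c x = real (deletion_count y x)" for x
  let ?X = "seqs q (Suc m)"
  have len: "length y = m" and set_y: "set y \<subseteq> {0..<q}"
    using y by (auto simp: seqs_def)
  have "N > 0"
    using \<open>q \<ge> 1\<close> by (simp add: N_def)
  have del_prob: "del_prob (Suc m) 1 x y = c x / real (Suc m)" if "x \<in> ?X" for x
    using that len by (simp add: del_prob_def c_def seqs_def omega_eq_deletion_count)
  have total: "(\<Sum>x\<in>?X. c x) = N"
    using sum_seqs_deletion_count[OF set_y, of real] len by (simp add: c_def N_def)
  have "(\<Sum>x\<in>?X. del_prob (Suc m) 1 x y) = (\<Sum>x\<in>?X. c x) / real (Suc m)"
    unfolding sum_divide_distrib using del_prob by (intro sum.cong) auto
  then have "(\<Sum>x\<in>?X. del_prob (Suc m) 1 x y) = real q"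
    by (simp add: total N_def)
  then have posterior: "posterior q (Suc m) 1 y x = c x / N" if "x \<in> ?X" for x
    using that del_prob by (simp add: posterior_def N_def)
  have "(\<Sum>x\<in>?X. c x * log 2 (c x)) = (\<Sum>r\<leftarrow>rlp y. (real r + 1) * log 2 (real r + 1))"
    using sum_seqs_deletion_count[OF set_y, of "\<lambda>k. real k * log 2 (real k)"] len
    by (simp add: c_def add.commute)
  moreover have "H_in_del q (Suc m) 1 y =
      - (\<Sum>x\<in>?X. let p = c x / N in if p = 0 then 0 else p * log 2 p)"
    unfolding H_in_del_def by (simp only: posterior cong: sum.cong)
  moreover have "\<dots> = log 2 N - (\<Sum>x\<in>?X. c x * log 2 (c x)) / N"
    using \<open>N > 0\<close> by (intro entropy_of_counts total)
  ultimately show ?thesis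
    by (simp add: N_def)
qed

theorem theorem1:
  fixes q n :: nat and y :: "nat list"
  assumes "q \<ge> 2" and "n \<ge> 1" and "y \<in> seqs q (n - 1)"
  shows "(\<forall>y' \<in> seqs q (n - 1). mset (rlp y') = mset (rlp y)
            \<longrightarrow> H_in_del q n 1 y' = H_in_del q n 1 y)
       \<and> H_in_del q n 1 y = log 2 (real n * real q)
            - (1 / (real n * real q)) *
              (\<Sum>i<num_runs y. (real (rlp y ! i) + 1) * log 2 (real (rlp y ! i) + 1))"
proof -
  let ?f = "\<lambda>r::nat. (real r + 1) * log 2 (real r + 1)"
  have H: "H_in_del q n 1 z = log 2 (real n * real q) - (\<Sum>r\<leftarrow>rlp z. ?f r) / (real n * real q)"
    if "z \<in> seqs q (n - 1)" for z
    using H_in_del_1[of q z "n - 1"] that assms(1,2) by simp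
  have runs_mset: "(\<Sum>r\<leftarrow>rlp z. ?f r) = (\<Sum>r\<in>#mset (rlp z). ?f r)" for z :: "nat list"
    by (simp flip: sum_mset_sum_list)
  have runs_nth: "(\<Sum>i<num_runs y. ?f (rlp y ! i)) = (\<Sum>r\<leftarrow>rlp y. ?f r)"
    by (simp add: num_runs_def sum_list_sum_nth atLeast0LessThan)
  show ?thesis
  proof (intro conjI ballI impI)
    fix y' assume "y' \<in> seqs q (n - 1)" and "mset (rlp y') = mset (rlp y)"
    then show "H_in_del q n 1 y' = H_in_del q n 1 y"
      using H assms(3) by (simp add: runs_mset)
  next
    show "H_in_del q n 1 y = log 2 (real n * real q) - (1 / (real n * real q)) *
        (\<Sum>i<num_runs y. ?f (rlp y ! i))"
      unfolding runs_nth H[OF assms(3)] by simp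
  qed
qed

end
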